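(* Let $\mathbb{F}$ be an algebraically closed field of characteristic zero. For any $f\in S_{3,3}$, the set $P_{3,3}\setminus\{f\}$ is not a separating set for $\mathcal{O}(\mathcal{N}_3^3)^{GL_3}$. In particular, no proper subset of $S_{3,3}$ is a separating set for $\mathcal{O}(\mathcal{N}_3^3)^{GL_3}$.
   Context: $\mathcal{N}_3^3$ is the set of triples $\underline{A}=(A_1,A_2,A_3)$ of nilpotent $3\times3$ matrices over $\mathbb{F}$, with $GL_3$ acting by simultaneous conjugation; $\mathcal{O}(\mathcal{N}_3^3)^{GL_3}$ is the algebra of $GL_3$-invariant polynomial functions on $\mathcal{N}_3^3$. $\mathrm{tr}(Y_{i_1}\cdots Y_{i_r})$ denotes the invariant $\underline{A}\mapsto\mathrm{tr}(A_{i_1}\cdots A_{i_r})$. $S_{3,3}$ is the set consisting of: $\mathrm{tr}(Y_iY_j),\ \mathrm{tr}(Y_i^2Y_j),\ \mathrm{tr}(Y_iY_j^2),\ \mathrm{tr}(Y_i^2Y_j^2),\ \mathrm{tr}(Y_i^2Y_j^2Y_iY_j)$ for $1\le i<j\le3$; $\mathrm{tr}(Y_1Y_2Y_3)$, $\mathrm{tr}(Y_1Y_3Y_2)$; $\mathrm{tr}(Y_i^2Y_jY_k)$ for $\{i,j,k\}=\{1,2,3\}$; $\mathrm{tr}(Y_1^2Y_2Y_1Y_3)$, $\mathrm{tr}(Y_2^2Y_1Y_2Y_3)$, $\mathrm{tr}(Y_3^2Y_1Y_3Y_2)$. $P_{3,3}=S_{3,3}\sqcup P'_{3,3}$, where $P'_{3,3}$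 consists of $\mathrm{tr}(Y_i^2Y_j^2Y_k)$ and $\mathrm{tr}(Y_i^2Y_j^2Y_iY_k)$ for $\{i,j,k\}=\{1,2,3\}$, and $\mathrm{tr}(Y_1^2Y_2^2Y_3^2)$. Two points $u,v$ are separated by a subset $S$ if some $f\in S$ has $f(u)\ne f(v)$, and separated if separated by the whole invariant algebra; $S$ is separating if all separated pairs are separated by $S$. *)

theory Defs
  imports "HOL-Analysis.Analysis" "HOL-Computational_Algebra.Polynomial"
begin

type_synonym 'a mat3 = "'a^3^3"
type_synonym 'a triple = "'a mat3 \<times> 'a mat3 \<times> 'a mat3"

definition comp :: "nat \<Rightarrow> ('a::semiring_1) triple \<Rightarrow> 'a mat3" where
  "comp k A = (if k = 1 then fst A else if k = 2 then fst (snd A) else snd (snd A))"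

fun mpow :: "('a::semiring_1) mat3 \<Rightarrow> nat \<Rightarrow> 'a mat3" where
  "mpow M 0 = mat 1"
| "mpow M (Suc n) = M ** mpow M n"

definition nilpotent_mat :: "('a::semiring_1) mat3 \<Rightarrow> bool" where
  "nilpotent_mat M \<longleftrightarrow> (\<exists>k. mpow M k = 0)"

definition N33 :: "('a::semiring_1) triple set" where
  "N33 = {A. nilpotent_mat (comp 1 A) \<and> nilpotent_mat (comp 2 A) \<and> nilpotent_mat (comp 3 A)}"

inductive_set polyfun :: "(('a::comm_ring_1) triple \<Rightarrow> 'a) set" where
  const: "(\<lambda>A. c) \<in> polyfun"
| coord: "k \<in> {1,2,3} \<Longrightarrow> (\<lambda>A. comp k A $ i $ j) \<in> polyfun"
| add: "f \<in> polyfun \<Longrightarrow> g \<in> polyfun \<Longrightarrow> (\<lambda>A. f A + g A) \<in> polyfun"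
| mult: "f \<in> polyfun \<Longrightarrow> g \<in> polyfun \<Longrightarrow> (\<lambda>A. f A * g A) \<in> polyfun"

definition conj_triple :: "('a::field) mat3 \<Rightarrow> 'a triple \<Rightarrow> 'a triple" where
  "conj_triple g A = (g ** fst A ** matrix_inv g,
                      g ** fst (snd A) ** matrix_inv g,
                      g ** snd (snd A) ** matrix_inv g)"

text \<open>GL_3-invariant regular functions on N_3^3: restrictions to N_3^3 of polynomial
  functions, invariant on N_3^3 under simultaneous conjugation.\<close>
definition invariant_on_N :: "(('a::field) triple \<Rightarrow> 'a) \<Rightarrow> bool" where
  "invariant_on_N f \<longleftrightarrow> f \<in> polyfun \<and>
     (\<forall>g A. invertible g \<and> A \<in> N33 \<longrightarrow> f (conj_triple g A) = f A)"

definition separated :: "('a::field) triple \<Rightarrow> 'a triple \<Rightarrow> bool" where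
  "separated u v \<longleftrightarrow> (\<exists>f. invariant_on_N f \<and> f u \<noteq> f v)"

text \<open>tr(Y_{i_1} ... Y_{i_r}) indexed by the word [i_1,...,i_r].\<close>
definition trw :: "nat list \<Rightarrow> ('a::comm_ring_1) triple \<Rightarrow> 'a" where
  "trw w A = trace (foldr (\<lambda>i M. comp i A ** M) w (mat 1))"

definition separated_by :: "nat list set \<Rightarrow> ('a::field) triple \<Rightarrow> 'a triple \<Rightarrow> bool" where
  "separated_by W u v \<longleftrightarrow> (\<exists>w\<in>W. trw w u \<noteq> (trw w v :: 'a))"

definition separating :: "('a::field) itself \<Rightarrow> nat list set \<Rightarrow> bool" where
  "separating _ W \<longleftrightarrow> (\<forall>u \<in> (N33 :: 'a triple set). \<forall>v \<in> N33.
       separated u v \<longrightarrow> separated_by W u v)"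

definition S33 :: "nat list set" where
  "S33 =
     {[i,j] | i j. 1 \<le> i \<and> i < j \<and> j \<le> 3}
   \<union> {[i,i,j] | i j. 1 \<le> i \<and> i < j \<and> j \<le> 3}
   \<union> {[i,j,j] | i j. 1 \<le> i \<and> i < j \<and> j \<le> 3}
   \<union> {[i,i,j,j] | i j. 1 \<le> i \<and> i < j \<and> j \<le> 3}
   \<union> {[i,i,j,j,i,j] | i j. 1 \<le> i \<and> i < j \<and> j \<le> 3}
   \<union> {[1,2,3], [1,3,2]}
   \<union> {[i,i,j,k] | i j k. {i,j,k} = {1,2,3::nat}}
   \<union> {[1,1,2,1,3], [2,2,1,2,3], [3,3,1,3,2]}"

definition P33' :: "nat list set" where
  "P33' =
     {[i,i,j,j,k] | i j k. {i,j,k} = {1,2,3::nat}}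
   \<union> {[i,i,j,j,i,k] | i j k. {i,j,k} = {1,2,3::nat}}
   \<union> {[1,1,2,2,3,3]}"

definition P33 :: "nat list set" where
  "P33 = S33 \<union> P33'"

end

theory Submission
  imports Defs
begin

text \<open>Every trace word is a GL_3-invariant polynomial function, so two points of N_3^3 on
  which one trace word differs are separated. For each f in S_{3,3} we exhibit such a pair
  of triples, with entries in {-1,0,1} and cubes of all components zero, on which
  tr(f) differs while every other trace word of P_{3,3} agrees; hence P_{3,3} - {f} is
  not separating. A proper subset of S_{3,3} omits some f and so lies in P_{3,3} - {f};
  since supersets of separating sets are separating, it is not separating either.
  The traces on the witnesses are integers, so the argument works over any field of
  characteristic zero.\<close>

definition M3 :: "'a::zero \<Rightarrow> 'a \<Rightarrow> 'a \<Rightarrow> 'a \<Rightarrow> 'a \<Rightarrow> 'a \<Rightarrow> 'a \<Rightarrow> 'a \<Rightarrow> 'a \<Rightarrow> 'a mat3" where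
  "M3 a b c d e f g h i = vector [vector [a, b, c], vector [d, e, f], vector [g, h, i]]"

lemma M3_mult:
  "(M3 a b c d e f g h i :: 'a::semiring_1 mat3) ** M3 a' b' c' d' e' f' g' h' i' =
   M3 (a*a' + b*d' + c*g') (a*b' + b*e' + c*h') (a*c' + b*f' + c*i')
      (d*a' + e*d' + f*g') (d*b' + e*e' + f*h') (d*c' + e*f' + f*i')
      (g*a' + h*d' + i*g') (g*b' + h*e' + i*h') (g*c' + h*f' + i*i')"
  unfolding M3_def matrix_matrix_mult_def by (simp add: vec_eq_iff forall_3 sum_3)

lemma mat_1_eq_M3: "(mat 1 :: 'a::semiring_1 mat3) = M3 1 0 0 0 1 0 0 0 1"
  unfolding M3_def by (simp add: vec_eq_iff forall_3 mat_def)

lemma zero_eq_M3: "(0 :: 'a::zero mat3) = M3 0 0 0 0 0 0 0 0 0"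
  unfolding M3_def by (simp add: vec_eq_iff forall_3)

lemma trace_M3: "trace (M3 a b c d e f g h i :: 'a::semiring_1 mat3) = a + e + i"
  unfolding M3_def trace_def by (simp add: sum_3)

lemma M3_eq_iff:
  "M3 a b c d e f g h i = M3 a' b' c' d' e' f' g' h' i' \<longleftrightarrow>
   a = a' \<and> b = b' \<and> c = c' \<and> d = d' \<and> e = e' \<and> f = f' \<and> g = g' \<and> h = h' \<and> i = i'"
  unfolding M3_def by (simp add: vec_eq_iff forall_3)

lemma mpow_3: "mpow M 3 = M ** (M ** (M ** mat 1))"
  by (simp add: numeral_3_eq_3)

lemma nilpotent_mat_if_cube_zero: "mpow M 3 = 0 \<Longrightarrow> nilpotent_mat M"
  unfolding nilpotent_mat_def by blast

definition word_matrix :: "nat list \<Rightarrow> ('a::semiring_1) triple \<Rightarrow> 'a mat3" where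
  "word_matrix w A = foldr (\<lambda>i M. comp i A ** M) w (mat 1)"

lemma word_matrix_simps [simp]:
  "word_matrix [] A = mat 1"
  "word_matrix (i # w) A = comp i A ** word_matrix w A"
  by (simp_all add: word_matrix_def)

lemma trw_eq_trace_word_matrix: "trw w A = trace (word_matrix w A)"
  by (simp add: trw_def word_matrix_def)

lemma matrix_inv_mult:
  fixes g :: "'a::semiring_1^'n^'n"
  assumes "invertible g"
  shows matrix_mul_matrix_inv: "g ** matrix_inv g = mat 1"
    and matrix_inv_matrix_mul: "matrix_inv g ** g = mat 1"
proof -
  have "\<exists>g'. g ** g' = mat 1 \<and> g' ** g = mat 1"
    using assms unfolding invertible_def by blast
  then have "g ** matrix_inv g = mat 1 \<and> matrix_inv g ** g = mat 1"
    unfolding matrix_inv_def by (rule someI_ex)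
  then show "g ** matrix_inv g = mat 1" "matrix_inv g ** g = mat 1" by auto
qed

lemma trace_conjugate:
  fixes g M :: "'a::comm_semiring_1^'n^'n"
  assumes "invertible g"
  shows "trace (g ** M ** matrix_inv g) = trace M"
proof -
  have "trace (g ** M ** matrix_inv g) = trace (M ** matrix_inv g ** g)"
    by (metis matrix_mul_assoc trace_mul_sym)
  also have "\<dots> = trace M"
    by (simp add: matrix_mul_assoc[symmetric] matrix_inv_matrix_mul[OF assms])
  finally show ?thesis .
qed

lemma word_matrix_conj_triple:
  assumes "invertible g"
  shows "word_matrix w (conj_triple g A) = g ** word_matrix w A ** matrix_inv g"
proof (induction w)
  case Nil
  show ?case by (simp add: matrix_mul_matrix_inv[OF assms])
next
  case (Cons i w)
  let ?C = "comp i A" and ?W = "word_matrix w A"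
  have "comp i (conj_triple g A) = g ** ?C ** matrix_inv g"
    by (simp add: comp_def conj_triple_def)
  then have "word_matrix (i # w) (conj_triple g A) = g ** ?C ** (matrix_inv g ** g) ** ?W ** matrix_inv g"
    by (simp add: Cons.IH matrix_mul_assoc)
  then show ?case
    by (simp add: matrix_inv_matrix_mul[OF assms] matrix_mul_assoc)
qed

lemma trw_conj_triple: "invertible g \<Longrightarrow> trw w (conj_triple g A) = trw w A"
  by (simp add: trw_eq_trace_word_matrix word_matrix_conj_triple trace_conjugate)

lemma polyfun_sum:
  "finite S \<Longrightarrow> (\<And>x. x \<in> S \<Longrightarrow> f x \<in> polyfun) \<Longrightarrow> (\<lambda>A. \<Sum>x\<in>S. f x A) \<in> polyfun"
proof (induction S rule: finite_induct)
  case empty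
  show ?case using polyfun.const[of 0] by simp
next
  case (insert x S)
  then show ?case using polyfun.add[of "f x" "\<lambda>A. \<Sum>x\<in>S. f x A"] by simp
qed

lemma polyfun_comp_entry: "(\<lambda>A :: 'a::comm_ring_1 triple. comp k A $ i $ j) \<in> polyfun"
proof (cases "k \<in> {1, 2, 3}")
  case True
  then show ?thesis by (rule polyfun.coord)
next
  case False
  then have "(\<lambda>A :: 'a triple. comp k A $ i $ j) = (\<lambda>A. comp 3 A $ i $ j)"
    by (auto simp: comp_def)
  then show ?thesis by (simp add: polyfun.coord)
qed

lemma polyfun_word_matrix_entry: "(\<lambda>A :: 'a::comm_ring_1 triple. word_matrix w A $ i $ j) \<in> polyfun"
proof (induction w arbitrary: i j)
  case Nil
  show ?case using polyfun.const[of "if i = j then 1 else 0"] by (simp add: mat_def)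
next
  case (Cons k w)
  have "(\<lambda>A :: 'a triple. \<Sum>t\<in>UNIV. comp k A $ i $ t * word_matrix w A $ t $ j) \<in> polyfun"
    using Cons.IH by (auto intro!: polyfun_sum polyfun.mult polyfun_comp_entry)
  then show ?case by (simp add: matrix_matrix_mult_def)
qed

lemma polyfun_trw: "(trw w :: 'a::comm_ring_1 triple \<Rightarrow> 'a) \<in> polyfun"
proof -
  have "(\<lambda>A :: 'a triple. \<Sum>i\<in>UNIV. word_matrix w A $ i $ i) \<in> polyfun"
    by (intro polyfun_sum polyfun_word_matrix_entry) simp
  moreover have "trw w = (\<lambda>A :: 'a triple. \<Sum>i\<in>UNIV. word_matrix w A $ i $ i)"
    by (simp add: fun_eq_iff trw_eq_trace_word_matrix trace_def)
  ultimately show ?thesis by simp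
qed

lemma invariant_on_N_trw: "invariant_on_N (trw w)"
  unfolding invariant_on_N_def using polyfun_trw trw_conj_triple by blast

lemma not_separating_by_trace_witness:
  fixes u v :: "'a::field triple"
  assumes "u \<in> N33" "v \<in> N33" "trw w u \<noteq> trw w v" "\<forall>w' \<in> W. trw w' u = trw w' v"
  shows "\<not> separating TYPE('a) W"
proof -
  have "separated u v"
    unfolding separated_def using invariant_on_N_trw assms(3) by blast
  moreover have "\<not> separated_by W u v"
    unfolding separated_by_def using assms(4) by blast
  ultimately show ?thesis
    unfolding separating_def using assms(1,2) by blast
qed

lemma separating_mono: "separating TYPE('a::field) W \<Longrightarrow> W \<subseteq> W' \<Longrightarrow> separating TYPE('a) W'"
  unfolding separating_def separated_by_def by blast

lemma Collect_ordered_pairs3_subset: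
  assumes "f 1 2 \<in> A" "f 1 3 \<in> A" "f 2 3 \<in> A"
  shows "{f i j | i j. 1 \<le> i \<and> i < j \<and> j \<le> (3::nat)} \<subseteq> A"
proof (rule subsetI, elim CollectE exE conjE)
  fix w and i j :: nat
  assume "w = f i j" "1 \<le> i" "i < j" "j \<le> 3"
  moreover from this have "i = 1 \<and> j = 2 \<or> i = 1 \<and> j = 3 \<or> i = 2 \<and> j = 3"
    by presburger
  ultimately show "w \<in> A" using assms by auto
qed

lemma Collect_perms3_subset:
  assumes "f 1 2 3 \<in> A" "f 1 3 2 \<in> A" "f 2 1 3 \<in> A" "f 2 3 1 \<in> A" "f 3 1 2 \<in> A" "f 3 2 1 \<in> A"
  shows "{f i j k | i j k. {i, j, k} = {1, 2, 3::nat}} \<subseteq> A"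
proof (rule subsetI, elim CollectE exE conjE)
  fix w and i j k :: nat
  assume w: "w = f i j k" and ijk: "{i, j, k} = {1, 2, 3}"
  have "i = 1 \<or> i = 2 \<or> i = 3" "j = 1 \<or> j = 2 \<or> j = 3" "k = 1 \<or> k = 2 \<or> k = 3"
    using ijk by blast+
  moreover have "1 \<in> {i, j, k}" "2 \<in> {i, j, k}" "3 \<in> {i, j, k}"
    unfolding ijk by simp_all
  ultimately show "w \<in> A"
    unfolding w using assms by (elim disjE) simp_all
qed

definition S33_words :: "nat list list" where
  "S33_words =
    [[1,2], [1,3], [2,3], [1,1,2], [1,1,3], [2,2,3], [1,2,2], [1,3,3], [2,3,3],
     [1,1,2,2], [1,1,3,3], [2,2,3,3], [1,1,2,2,1,2], [1,1,3,3,1,3], [2,2,3,3,2,3],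
     [1,2,3], [1,3,2], [1,1,2,3], [1,1,3,2], [2,2,1,3], [2,2,3,1], [3,3,1,2], [3,3,2,1],
     [1,1,2,1,3], [2,2,1,2,3], [3,3,1,3,2]]"

definition P33'_words :: "nat list list" where
  "P33'_words =
    [[1,1,2,2,3], [1,1,3,3,2], [2,2,1,1,3], [2,2,3,3,1], [3,3,1,1,2], [3,3,2,2,1],
     [1,1,2,2,1,3], [1,1,3,3,1,2], [2,2,1,1,2,3], [2,2,3,3,2,1], [3,3,1,1,3,2],
     [3,3,2,2,3,1], [1,1,2,2,3,3]]"

lemma S33_subset_S33_words: "S33 \<subseteq> set S33_words"
  unfolding S33_def S33_words_def
  by (intro Un_least Collect_ordered_pairs3_subset Collect_perms3_subset) simp_all

lemma P33'_subset_P33'_words: "P33' \<subseteq> set P33'_words"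
  unfolding P33'_def P33'_words_def
  by (intro Un_least Collect_perms3_subset) simp_all

lemma P33_subset_words: "P33 \<subseteq> set (S33_words @ P33'_words)"
  unfolding P33_def set_append by (rule Un_mono[OF S33_subset_S33_words P33'_subset_P33'_words])

definition trace_witnesses :: "(nat list \<times> ('a::comm_ring_1) triple \<times> 'a triple) list" where
  "trace_witnesses = [
   ([1,2],
    (M3 0 1 0 0 0 1 0 0 0, M3 0 0 0 0 0 0 1 0 0, M3 0 0 0 1 0 1 0 0 0),
    (M3 0 1 0 0 0 1 0 0 0, M3 0 0 0 (-1) 0 0 1 0 0, M3 0 0 0 1 0 1 0 0 0)),
   ([1,3],
    (M3 0 1 0 0 0 1 0 0 0, M3 0 (-1) 0 0 0 0 (-1) (-1) 0, M3 0 0 0 0 0 0 0 0 0),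
    (M3 0 1 0 0 0 1 0 0 0, M3 0 (-1) 0 0 0 0 (-1) (-1) 0, M3 0 0 0 0 0 0 0 (-1) 0)),
   ([2,3],
    (M3 0 1 0 0 0 1 0 0 0, M3 0 0 0 0 0 0 0 1 0, M3 0 0 0 1 0 1 0 0 0),
    (M3 0 1 0 0 0 1 0 0 0, M3 0 (-1) 0 0 0 0 0 1 0, M3 0 0 0 1 0 1 0 0 0)),
   ([1,1,2],
    (M3 0 0 0 0 0 0 0 1 0, M3 0 0 0 (-1) 0 (-1) 0 0 0, M3 0 1 0 0 0 1 0 0 0),
    (M3 0 0 (-1) 0 0 0 0 1 0, M3 0 0 0 (-1) 0 (-1) 0 0 0, M3 0 1 0 0 0 1 0 0 0)),
   ([1,1,3],
    (M3 0 1 0 0 0 1 0 0 0, M3 0 0 0 0 0 (-1) 0 0 0, M3 0 0 0 (-1) 0 1 (-1) 0 0),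
    (M3 0 1 0 0 0 1 0 0 0, M3 0 0 0 0 0 1 0 0 0, M3 0 0 0 (-1) 0 (-1) 1 0 0)),
   ([2,2,3],
    (M3 0 0 0 0 0 (-1) 0 0 0, M3 0 1 0 0 0 1 0 0 0, M3 0 0 0 (-1) 0 1 (-1) 0 0),
    (M3 0 0 0 0 0 1 0 0 0, M3 0 1 0 0 0 1 0 0 0, M3 0 0 0 (-1) 0 (-1) 1 0 0)),
   ([1,2,2],
    (M3 0 1 0 0 0 1 0 0 0, M3 0 0 0 0 0 0 1 0 0, M3 0 0 0 (-1) 0 (-1) 0 0 0),
    (M3 0 1 0 0 0 1 0 0 0, M3 0 0 0 0 0 (-1) 1 0 0, M3 0 0 0 (-1) 0 (-1) 0 0 0)),
   ([1,3,3],
    (M3 0 0 0 0 0 0 (-1) 1 0, M3 0 (-1) 0 0 0 0 0 (-1) 0, M3 0 1 0 0 0 1 0 0 0),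
    (M3 0 0 0 0 0 0 1 1 0, M3 0 1 0 0 0 0 0 (-1) 0, M3 0 1 0 0 0 1 0 0 0)),
   ([2,3,3],
    (M3 0 1 0 0 0 1 0 0 0, M3 0 0 0 0 0 0 0 1 0, M3 0 0 0 (-1) 0 (-1) 0 0 0),
    (M3 0 1 0 0 0 1 0 0 0, M3 0 0 0 0 0 0 0 1 0, M3 0 0 (-1) (-1) 0 (-1) 0 0 0)),
   ([1,1,2,2],
    (M3 0 1 0 0 0 1 0 0 0, M3 (-1) (-1) 0 1 1 0 (-1) 0 0, M3 0 0 0 0 0 0 0 0 0),
    (M3 0 1 0 0 0 1 0 0 0, M3 0 0 0 0 (-1) (-1) (-1) 1 1, M3 0 0 0 0 0 0 0 0 0)),
   ([1,1,3,3],
    (M3 0 1 0 0 0 1 0 0 0, M3 0 0 0 0 0 0 0 0 0, M3 (-1) (-1) 0 1 1 0 (-1) 0 0),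
    (M3 0 1 0 0 0 1 0 0 0, M3 0 0 0 0 0 0 0 0 0, M3 0 0 0 0 (-1) (-1) (-1) 1 1)),
   ([2,2,3,3],
    (M3 0 0 0 0 0 0 0 0 0, M3 0 1 0 0 0 1 0 0 0, M3 (-1) (-1) 0 1 1 0 (-1) 0 0),
    (M3 0 0 0 0 0 0 0 0 0, M3 0 1 0 0 0 1 0 0 0, M3 0 0 0 0 (-1) (-1) (-1) 1 1)),
   ([1,1,2,2,1,2],
    (M3 0 1 0 0 0 1 0 0 0, M3 0 (-1) 0 0 0 0 (-1) (-1) 0, M3 0 0 0 0 0 0 0 0 0),
    (M3 0 1 0 0 0 1 0 0 0, M3 (-1) 0 1 (-1) 0 0 (-1) 0 1, M3 0 0 0 0 0 0 0 0 0)),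
   ([1,1,3,3,1,3],
    (M3 0 1 0 0 0 1 0 0 0, M3 0 0 0 0 0 0 0 0 0, M3 0 (-1) 0 0 0 0 (-1) (-1) 0),
    (M3 0 1 0 0 0 1 0 0 0, M3 0 0 0 0 0 0 0 0 0, M3 (-1) 0 1 (-1) 0 0 (-1) 0 1)),
   ([2,2,3,3,2,3],
    (M3 0 0 0 0 0 0 0 0 0, M3 0 1 0 0 0 1 0 0 0, M3 0 (-1) 0 0 0 0 (-1) (-1) 0),
    (M3 0 0 0 0 0 0 0 0 0, M3 0 1 0 0 0 1 0 0 0, M3 (-1) 0 1 (-1) 0 0 (-1) 0 1)),
   ([1,2,3],
    (M3 0 1 0 0 0 1 0 0 0, M3 0 (-1) 0 0 0 0 (-1) (-1) 0, M3 0 0 0 0 0 0 0 0 0),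
    (M3 0 1 0 0 0 1 0 0 0, M3 0 (-1) 0 0 0 0 (-1) (-1) 0, M3 0 (-1) 0 0 0 0 0 0 0)),
   ([1,3,2],
    (M3 0 1 0 0 0 1 0 0 0, M3 0 0 0 0 0 0 0 0 0, M3 0 1 0 0 0 0 (-1) 1 0),
    (M3 0 1 0 0 0 1 0 0 0, M3 0 1 0 0 0 0 0 0 0, M3 0 1 0 0 0 0 (-1) 1 0)),
   ([1,1,2,3],
    (M3 0 1 0 0 0 1 0 0 0, M3 0 (-1) 0 0 0 0 0 1 0, M3 0 0 0 1 0 1 0 0 0),
    (M3 0 1 0 0 0 1 0 0 0, M3 (-1) (-1) (-1) 1 1 (-1) 0 0 0, M3 (-1) (-1) (-1) 1 1 (-1) 0 0 0)),
   ([1,1,3,2],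
    (M3 0 1 0 0 0 1 0 0 0, M3 (-1) (-1) (-1) 1 1 1 0 0 0, M3 0 0 0 (-1) 0 0 1 0 0),
    (M3 0 1 0 0 0 1 0 0 0, M3 0 0 0 1 0 (-1) 0 0 0, M3 1 0 (-1) (-1) 0 1 1 0 (-1))),
   ([2,2,1,3],
    (M3 0 (-1) 0 0 0 0 0 1 0, M3 0 1 0 0 0 1 0 0 0, M3 0 0 0 1 0 1 0 0 0),
    (M3 (-1) (-1) (-1) 1 1 (-1) 0 0 0, M3 0 1 0 0 0 1 0 0 0, M3 (-1) (-1) (-1) 1 1 (-1) 0 0 0)),
   ([2,2,3,1],
    (M3 (-1) (-1) (-1) 1 1 1 0 0 0, M3 0 1 0 0 0 1 0 0 0, M3 0 0 0 (-1) 0 0 1 0 0),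
    (M3 0 0 0 1 0 (-1) 0 0 0, M3 0 1 0 0 0 1 0 0 0, M3 1 0 (-1) (-1) 0 1 1 0 (-1))),
   ([3,3,1,2],
    (M3 0 (-1) 0 0 0 0 0 1 0, M3 0 0 0 1 0 1 0 0 0, M3 0 1 0 0 0 1 0 0 0),
    (M3 (-1) (-1) (-1) 1 1 (-1) 0 0 0, M3 (-1) (-1) (-1) 1 1 (-1) 0 0 0, M3 0 1 0 0 0 1 0 0 0)),
   ([3,3,2,1],
    (M3 (-1) (-1) (-1) 1 1 1 0 0 0, M3 0 0 0 (-1) 0 0 1 0 0, M3 0 1 0 0 0 1 0 0 0),
    (M3 0 0 0 1 0 (-1) 0 0 0, M3 1 0 (-1) (-1) 0 1 1 0 (-1), M3 0 1 0 0 0 1 0 0 0)),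
   ([1,1,2,1,3],
    (M3 0 1 0 0 0 1 0 0 0, M3 (-1) 0 (-1) 0 0 0 1 0 1, M3 0 (-1) 0 0 0 0 0 1 0),
    (M3 0 1 0 0 0 1 0 0 0, M3 (-1) 0 (-1) 0 0 0 1 0 1, M3 0 0 0 1 0 1 0 0 0)),
   ([2,2,1,2,3],
    (M3 (-1) 0 (-1) 0 0 0 1 0 1, M3 0 1 0 0 0 1 0 0 0, M3 0 (-1) 0 0 0 0 0 1 0),
    (M3 (-1) 0 (-1) 0 0 0 1 0 1, M3 0 1 0 0 0 1 0 0 0, M3 0 0 0 1 0 1 0 0 0)),
   ([3,3,1,3,2],
    (M3 (-1) 0 (-1) 0 0 0 1 0 1, M3 0 (-1) 0 0 0 0 0 1 0, M3 0 1 0 0 0 1 0 0 0),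
    (M3 (-1) 0 (-1) 0 0 0 1 0 1, M3 0 0 0 1 0 1 0 0 0, M3 0 1 0 0 0 1 0 0 0))
  ]"

lemma map_fst_trace_witnesses: "map fst trace_witnesses = S33_words"
  by (simp add: trace_witnesses_def S33_words_def)

lemma trace_witnesses_valid:
  "list_all (\<lambda>(w, u, v).
      list_all (\<lambda>k. mpow (comp k u) 3 = 0 \<and> mpow (comp k v) 3 = 0) [1, 2, 3] \<and>
      trw w u \<noteq> trw w v \<and>
      list_all (\<lambda>w'. w' = w \<or> trw w' u = trw w' v) (S33_words @ P33'_words))
    (trace_witnesses :: (nat list \<times> 'a::field_char_0 triple \<times> 'a triple) list)"
  by (simp add: trace_witnesses_def S33_words_def P33'_words_def trw_eq_trace_word_matrix comp_def
      mpow_3 M3_mult mat_1_eq_M3 zero_eq_M3 M3_eq_iff trace_M3)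

lemma not_separating_P33_minus_S33:
  assumes "f \<in> S33"
  shows "\<not> separating TYPE('a::field_char_0) (P33 - {f})"
proof -
  have "S33 \<subseteq> fst ` set (trace_witnesses :: (nat list \<times> 'a triple \<times> 'a triple) list)"
    using S33_subset_S33_words by (simp flip: map_fst_trace_witnesses[where 'a = 'a])
  then obtain u v :: "'a triple" where "(f, u, v) \<in> set trace_witnesses"
    using assms by force
  then have cubes: "\<forall>k \<in> {1, 2, 3}. mpow (comp k u) 3 = 0 \<and> mpow (comp k v) 3 = 0"
    and differ: "trw f u \<noteq> trw f v"
    and agree: "\<forall>w' \<in> set (S33_words @ P33'_words). w' = f \<or> trw w' u = trw w' v"
    using trace_witnesses_valid[where 'a = 'a] by (fastforce simp: list_all_iff)+
  from cubes have "u \<in> N33" "v \<in> N33"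
    by (simp_all add: N33_def nilpotent_mat_if_cube_zero)
  moreover have "\<forall>w' \<in> P33 - {f}. trw w' u = trw w' v"
    using agree P33_subset_words by blast
  ultimately show ?thesis
    using differ not_separating_by_trace_witness by blast
qed

theorem lemma3p4:
  shows "(\<forall>f \<in> S33. \<not> separating TYPE('a::{alg_closed_field, field_char_0}) (P33 - {f}))
       \<and> (\<forall>W. W \<subset> S33 \<longrightarrow> \<not> separating TYPE('a) W)"
proof (intro conjI ballI allI impI notI)
  fix f assume "f \<in> S33"
  then show "separating TYPE('a) (P33 - {f}) \<Longrightarrow> False"
    using not_separating_P33_minus_S33 by blast
next
  fix W assume "W \<subset> S33" and "separating TYPE('a) W"
  then obtain f where "f \<in> S33" "W \<subseteq> P33 - {f}"
    unfolding P33_def by blast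
  then show False
    using not_separating_P33_minus_S33 separating_mono \<open>separating TYPE('a) W\<close> by blast
qed

end
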